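(* Let $\alpha\in\mathbb{R}$, let $\mathbb{Q}[x]^+_{x=\alpha}=\{p\in\mathbb{Q}[x]: p(\alpha)>0\}$, and suppose $\mathbb{Q}[x]^+_{x=\alpha}=H_1\sqcup H_2$ with $H_1,H_2$ disjoint nonempty subsets, each closed under addition and multiplication. Then for every $N\ge 2$ and $i=1,2$, the set $H_i\cap\mathbb{Q}[x]^{<N}$ is not contained in any proper $\mathbb{Q}$-linear subspace of $\mathbb{Q}[x]^{<N}$, where $\mathbb{Q}[x]^{<N}$ denotes the $\mathbb{Q}$-vector space of rational polynomials of degree less than $N$. *)

theory Defs
  imports Complex_Main "HOL-Computational_Algebra.Polynomial"
begin

definition pos_at :: "real \<Rightarrow> rat poly set" where
  "pos_at \<alpha> = {p. poly (map_poly of_rat p) \<alpha> > 0}"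

text \<open>The Q-vector space of rational polynomials of degree less than N
  (the zero polynomial has degree 0 in Isabelle, so it is included for N >= 1).\<close>
definition polys_below :: "nat \<Rightarrow> rat poly set" where
  "polys_below N = {p. degree p < N}"

end

theory Submission
  imports Defs
begin

text \<open>Let \<open>H\<close> be one part and \<open>H'\<close> the other, and fix a rational \<open>\<beta> < \<alpha>\<close>. Every
  \<open>p\<close> of positive degree that is positive at \<open>\<alpha>\<close> splits as \<open>p = A + (x - \<beta>) s\<close> with
  \<open>deg A \<le> 1\<close>, \<open>deg s < deg p\<close> and \<open>A\<close>, \<open>s\<close> positive at \<open>\<alpha>\<close>; if none of \<open>A\<close>, \<open>x - \<beta>\<close>,
  \<open>s\<close> lay in \<open>H\<close>, all would lie in \<open>H'\<close>, and so would \<open>p\<close>. Descending on the degree,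
  \<open>H\<close> contains some \<open>h\<close> of degree at most one. For any \<open>q\<close> and small rational \<open>\<epsilon> > 0\<close>
  both \<open>h + \<epsilon> q\<close> and \<open>h - \<epsilon> q\<close> are positive at \<open>\<alpha>\<close>, and they cannot both lie in \<open>H'\<close>
  since their sum \<open>2 h\<close> lies in \<open>H\<close>. So a subspace containing \<open>H \<inter> polys_below N\<close>,
  \<open>N \<ge> 2\<close>, contains \<open>h\<close> and one of \<open>h \<plusminus> \<epsilon> q\<close>, hence \<open>q\<close>.\<close>

lemma map_poly_of_rat_add:
  "map_poly (of_rat :: rat \<Rightarrow> 'a::field_char_0) (p + q) = map_poly of_rat p + map_poly of_rat q"
  by (intro poly_eqI) (simp add: coeff_map_poly of_rat_add)

lemma map_poly_of_rat_diff:
  "map_poly (of_rat :: rat \<Rightarrow> 'a::field_char_0) (p - q) = map_poly of_rat p - map_poly of_rat q"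
  by (intro poly_eqI) (simp add: coeff_map_poly of_rat_diff)

lemma map_poly_of_rat_mult:
  "map_poly (of_rat :: rat \<Rightarrow> 'a::field_char_0) (p * q) = map_poly of_rat p * map_poly of_rat q"
  by (intro poly_eqI) (simp add: coeff_map_poly coeff_mult of_rat_sum of_rat_mult)

lemma map_poly_of_rat_smult:
  "map_poly (of_rat :: rat \<Rightarrow> 'a::field_char_0) (smult c p) = smult (of_rat c) (map_poly of_rat p)"
  by (simp add: map_poly_smult of_rat_mult)

lemma module_smult: "module (smult :: 'a::comm_ring_1 \<Rightarrow> 'a poly \<Rightarrow> 'a poly)"
  by unfold_locales (simp_all add: smult_add_right smult_add_left)

lemma pos_at_iff: "p \<in> pos_at \<alpha> \<longleftrightarrow> 0 < poly (map_poly of_rat p) \<alpha>"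
  by (simp add: pos_at_def)

lemma pos_at_decompose:
  fixes p :: "rat poly"
  assumes p: "p \<in> pos_at \<alpha>" and "0 < degree p"
  obtains A l s where "p = A + l * s" and "A \<in> pos_at \<alpha>" "l \<in> pos_at \<alpha>" "s \<in> pos_at \<alpha>"
    and "degree A \<le> 1" "degree l \<le> 1" "degree s < degree p"
proof -
  let ?E = "\<lambda>p. poly (map_poly (of_rat :: rat \<Rightarrow> real) p) \<alpha>"
  obtain \<beta> :: rat where "of_rat \<beta> < \<alpha>"
    using of_rat_dense[of "\<alpha> - 1" \<alpha>] by auto
  define l where "l = [:-\<beta>, 1:]"
  define r where "r = synthetic_div p \<beta>"
  define c where "c = poly p \<beta>"
  have El: "?E l > 0"
    using \<open>of_rat \<beta> < \<alpha>\<close> by (simp add: l_def map_poly_pCons of_rat_minus)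
  have p_eq: "p = l * r + [:c:]"
    unfolding l_def r_def c_def by (rule synthetic_div_correct' [symmetric])
  have Ep: "?E p = ?E l * ?E r + of_rat c"
    by (subst p_eq) (simp add: map_poly_of_rat_add map_poly_of_rat_mult map_poly_pCons)
  \<comment> \<open>any rational \<open>m\<close> with \<open>0 < c + m l(\<alpha>) < p(\<alpha>)\<close> gives \<open>A = c + m l\<close> and \<open>s = r - m\<close>\<close>
  have "- of_rat c / ?E l < (?E p - of_rat c) / ?E l"
    using p El by (intro divide_strict_right_mono) (auto simp: pos_at_iff)
  then obtain m :: rat where m: "- of_rat c / ?E l < of_rat m" "of_rat m < (?E p - of_rat c) / ?E l"
    using of_rat_dense by blast
  define A where "A = [:c:] + smult m l"
  define s where "s = r - [:m:]"
  show thesis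
  proof
    show "p = A + l * s"
      by (subst p_eq) (simp add: A_def s_def algebra_simps)
    have EA: "?E A = of_rat c + of_rat m * ?E l"
      by (simp add: A_def map_poly_of_rat_add map_poly_of_rat_smult map_poly_pCons)
    show "A \<in> pos_at \<alpha>"
      using m(1) El by (simp add: pos_at_iff EA field_simps)
    show "l \<in> pos_at \<alpha>"
      using El by (simp add: pos_at_iff)
    have "?E s = ?E r - of_rat m"
      by (simp add: s_def map_poly_of_rat_diff map_poly_pCons)
    then show "s \<in> pos_at \<alpha>"
      using m(2) El Ep by (simp add: pos_at_iff field_simps)
    show "degree A \<le> 1"
      by (simp add: A_def l_def)
    show "degree l \<le> 1"
      by (simp add: l_def)
    have "degree s \<le> degree r"
      by (simp add: s_def degree_diff_le)
    then show "degree s < degree p"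
      using \<open>0 < degree p\<close> by (simp add: r_def degree_synthetic_div)
  qed
qed

lemma pos_at_part_has_degree_le_1:
  assumes union: "H \<union> H' = pos_at \<alpha>" and disj: "H \<inter> H' = {}"
    and closed': "\<And>p q. p \<in> H' \<Longrightarrow> q \<in> H' \<Longrightarrow> p + q \<in> H' \<and> p * q \<in> H'"
    and "p \<in> H"
  shows "\<exists>h\<in>H. degree h \<le> 1"
  using \<open>p \<in> H\<close>
proof (induction "degree p" arbitrary: p rule: less_induct)
  case less
  show ?case
  proof (cases "degree p \<le> 1")
    case True
    with less.prems show ?thesis by blast
  next
    case False
    from less.prems union have "p \<in> pos_at \<alpha>" by blast
    moreover from False have "0 < degree p" by simp
    ultimately obtain A l s where p_eq: "p = A + l * s"
      and pos: "A \<in> pos_at \<alpha>" "l \<in> pos_at \<alpha>" "s \<in> pos_at \<alpha>"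
      and deg: "degree A \<le> 1" "degree l \<le> 1" "degree s < degree p"
      by (rule pos_at_decompose)
    have "A \<in> H \<or> l \<in> H \<or> s \<in> H"
    proof (rule ccontr)
      assume "\<not> ?thesis"
      with pos union have "A \<in> H'" "l \<in> H'" "s \<in> H'" by blast+
      then have "A + l * s \<in> H'" using closed'[of l s] closed'[of A "l * s"] by blast
      with less.prems disj show False unfolding p_eq by blast
    qed
    then show ?thesis
    proof (elim disjE)
      assume "s \<in> H"
      then show ?thesis by (rule less.hyps[OF deg(3)])
    qed (use deg in blast)+
  qed
qed

lemma pos_at_perturb:
  assumes "h \<in> pos_at \<alpha>"
  obtains \<epsilon> :: rat where "0 < \<epsilon>" "h + smult \<epsilon> q \<in> pos_at \<alpha>" "h - smult \<epsilon> q \<in> pos_at \<alpha>"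
proof -
  let ?E = "\<lambda>p. poly (map_poly (of_rat :: rat \<Rightarrow> real) p) \<alpha>"
  have "0 < ?E h"
    using assms by (simp add: pos_at_iff)
  moreover have "0 < \<bar>?E q\<bar> + 1"
    by (simp add: add_nonneg_pos)
  ultimately have "0 < ?E h / (\<bar>?E q\<bar> + 1)"
    by (rule divide_pos_pos)
  from of_rat_dense [OF this] obtain \<epsilon> :: rat
    where "0 < \<epsilon>" "of_rat \<epsilon> < ?E h / (\<bar>?E q\<bar> + 1)"
    by auto
  with \<open>0 < \<bar>?E q\<bar> + 1\<close> have "of_rat \<epsilon> * \<bar>?E q\<bar> + of_rat \<epsilon> < ?E h"
    by (simp add: pos_less_divide_eq distrib_left)
  moreover have "\<bar>of_rat \<epsilon> * ?E q\<bar> = of_rat \<epsilon> * \<bar>?E q\<bar>" "0 < real_of_rat \<epsilon>"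
    using \<open>0 < \<epsilon>\<close> by (simp_all add: abs_mult)
  ultimately have small: "\<bar>of_rat \<epsilon> * ?E q\<bar> < ?E h"
    by linarith
  have "?E (h + smult \<epsilon> q) = ?E h + of_rat \<epsilon> * ?E q"
    by (simp add: map_poly_of_rat_add map_poly_of_rat_smult)
  moreover have "?E (h - smult \<epsilon> q) = ?E h - of_rat \<epsilon> * ?E q"
    by (simp add: map_poly_of_rat_diff map_poly_of_rat_smult)
  ultimately show thesis
    using \<open>0 < \<epsilon>\<close> small by (intro that) (auto simp: pos_at_iff abs_less_iff)
qed

lemma pos_at_part_perturb:
  assumes union: "H \<union> H' = pos_at \<alpha>" and disj: "H \<inter> H' = {}"
    and closed: "\<And>p q. p \<in> H \<Longrightarrow> q \<in> H \<Longrightarrow> p + q \<in> H \<and> p * q \<in> H"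
    and closed': "\<And>p q. p \<in> H' \<Longrightarrow> q \<in> H' \<Longrightarrow> p + q \<in> H' \<and> p * q \<in> H'"
    and "h \<in> H"
  obtains \<epsilon> :: rat where "\<epsilon> \<noteq> 0" "h + smult \<epsilon> q \<in> H"
proof -
  from \<open>h \<in> H\<close> union have "h \<in> pos_at \<alpha>" by blast
  then obtain \<epsilon> :: rat where "0 < \<epsilon>"
    and pos: "h + smult \<epsilon> q \<in> pos_at \<alpha>" "h - smult \<epsilon> q \<in> pos_at \<alpha>"
    by (rule pos_at_perturb)
  have "h + smult \<epsilon> q \<in> H \<or> h + smult (- \<epsilon>) q \<in> H"
  proof (rule ccontr)
    assume "\<not> ?thesis"
    with pos union have "h + smult \<epsilon> q \<in> H'" "h + smult (- \<epsilon>) q \<in> H'" by auto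
    then have "h + h \<in> H'"
      using closed'[of "h + smult \<epsilon> q" "h + smult (- \<epsilon>) q"] by simp
    moreover have "h + h \<in> H"
      using closed[of h h] \<open>h \<in> H\<close> by simp
    ultimately show False
      using disj by blast
  qed
  moreover have "\<epsilon> \<noteq> 0" "- \<epsilon> \<noteq> 0"
    using \<open>0 < \<epsilon>\<close> by simp_all
  ultimately show thesis
    using that by blast
qed

lemma pos_at_part_spans_polys_below:
  assumes union: "H \<union> H' = pos_at \<alpha>" and disj: "H \<inter> H' = {}"
    and closed: "\<And>p q. p \<in> H \<Longrightarrow> q \<in> H \<Longrightarrow> p + q \<in> H \<and> p * q \<in> H"
    and closed': "\<And>p q. p \<in> H' \<Longrightarrow> q \<in> H' \<Longrightarrow> p + q \<in> H' \<and> p * q \<in> H'"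
    and "H \<noteq> {}" and "2 \<le> N"
    and W: "module.subspace (smult :: rat \<Rightarrow> rat poly \<Rightarrow> rat poly) W"
      "W \<subseteq> polys_below N" "H \<inter> polys_below N \<subseteq> W"
  shows "W = polys_below N"
proof -
  interpret module "smult :: rat \<Rightarrow> rat poly \<Rightarrow> rat poly"
    by (rule module_smult)
  from \<open>H \<noteq> {}\<close> obtain p where "p \<in> H" by blast
  then obtain h where "h \<in> H" "degree h \<le> 1"
    using pos_at_part_has_degree_le_1[OF union disj closed'] by blast
  with \<open>2 \<le> N\<close> W(3) have "h \<in> W" "degree h < N"
    by (auto simp: polys_below_def)
  have "q \<in> W" if "q \<in> polys_below N" for q
  proof -
    obtain \<epsilon> where "\<epsilon> \<noteq> 0" "h + smult \<epsilon> q \<in> H"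
      using pos_at_part_perturb[OF union disj closed closed' \<open>h \<in> H\<close>] .
    moreover have "degree (h + smult \<epsilon> q) < N"
      using \<open>degree h < N\<close> that
      by (auto simp: polys_below_def intro: degree_add_less le_less_trans[OF degree_smult_le])
    ultimately have "h + smult \<epsilon> q \<in> W"
      using W(3) by (auto simp: polys_below_def)
    with \<open>h \<in> W\<close> have "(h + smult \<epsilon> q) - h \<in> W"
      using W(1) by (intro subspace_diff)
    then have "smult \<epsilon> q \<in> W"
      by simp
    then have "smult (inverse \<epsilon>) (smult \<epsilon> q) \<in> W"
      using subspace_scale[OF W(1)] by blast
    with \<open>\<epsilon> \<noteq> 0\<close> show "q \<in> W"
      by simp
  qed
  with W(2) show ?thesis by blast
qed

theorem lemma4p5:
  fixes \<alpha> :: real and H1 H2 :: "rat poly set"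
  assumes union: "H1 \<union> H2 = pos_at \<alpha>"
    and disj: "H1 \<inter> H2 = {}"
    and ne1: "H1 \<noteq> {}" and ne2: "H2 \<noteq> {}"
    and closed1: "\<And>p q. p \<in> H1 \<Longrightarrow> q \<in> H1 \<Longrightarrow> p + q \<in> H1 \<and> p * q \<in> H1"
    and closed2: "\<And>p q. p \<in> H2 \<Longrightarrow> q \<in> H2 \<Longrightarrow> p + q \<in> H2 \<and> p * q \<in> H2"
  shows "\<forall>N\<ge>2. \<forall>H\<in>{H1, H2}. \<forall>W.
           module.subspace (smult :: rat \<Rightarrow> rat poly \<Rightarrow> rat poly) W \<and>
           W \<subseteq> polys_below N \<and> H \<inter> polys_below N \<subseteq> W
           \<longrightarrow> W = polys_below N"
proof (intro allI impI ballI, elim conjE)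
  fix N :: nat and H W
  assume "N \<ge> 2" and "H \<in> {H1, H2}"
    and W: "module.subspace (smult :: rat \<Rightarrow> rat poly \<Rightarrow> rat poly) W"
      "W \<subseteq> polys_below N" "H \<inter> polys_below N \<subseteq> W"
  from \<open>H \<in> {H1, H2}\<close> consider "H = H1" | "H = H2" by blast
  then show "W = polys_below N"
  proof cases
    case 1
    with W(3) have "H1 \<inter> polys_below N \<subseteq> W" by simp
    with union disj closed1 closed2 ne1 \<open>N \<ge> 2\<close> W(1,2) show ?thesis
      by (rule pos_at_part_spans_polys_below)
  next
    case 2
    with W(3) have "H2 \<inter> polys_below N \<subseteq> W" by simp
    moreover from union disj have "H2 \<union> H1 = pos_at \<alpha>" "H2 \<inter> H1 = {}" by blast+
    ultimately show ?thesis
      using closed1 closed2 ne2 \<open>N \<ge> 2\<close> W(1,2) by (intro pos_at_part_spans_polys_below)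
  qed
qed

end
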